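(* Let $X$ be a centered isotropic random vector in $\mathbb{R}^n$ and let $X_1,\dots,X_N$ be independent copies of $X$. Assume that for some $p>2$ and $B\geq 1$ we have $\mathbb{E}|\langle X,y\rangle|^p\leq B$ for all $y\in S^{n-1}$. For $H>0$ let $G_H$ be the random graph on vertex set $[N]$ whose edges are the pairs $(i,j)$ with $1\leq i<j\leq N$ and $|\langle X_i,X_j\rangle|>H\max_{h\leq N}\|X_h\|$. Then for any $H>0$ and any integer $m>1$, the chromatic number satisfies $\chi(G_H)\leq m$ with probability at least $1-(BNH^{-p})^m n^{p/2}$.
   Context: Isotropic means $\mathbb{E}XX^T=\mathrm{Id}_n$. $\chi(G)$ is the smallest number of colors in a proper vertex coloring of the graph $G$. *)

theory Defs
  imports "HOL-Probability.Probability"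
begin

text \<open>Simple graphs given by a vertex set V and an edge set Ed of (unordered) pairs,
  represented as ordered pairs (i,j).\<close>

definition proper_colouring :: "'v set \<Rightarrow> ('v \<times> 'v) set \<Rightarrow> nat \<Rightarrow> ('v \<Rightarrow> nat) \<Rightarrow> bool" where
  "proper_colouring V Ed k c \<longleftrightarrow> (\<forall>v\<in>V. c v < k) \<and> (\<forall>(u,v)\<in>Ed. c u \<noteq> c v)"

definition chromatic_number :: "'v set \<Rightarrow> ('v \<times> 'v) set \<Rightarrow> nat" where
  "chromatic_number V Ed = (LEAST k. \<exists>c. proper_colouring V Ed k c)"

definition GH_edges :: "(nat \<Rightarrow> real ^ 'n) \<Rightarrow> nat \<Rightarrow> real \<Rightarrow> (nat \<times> nat) set" where
  "GH_edges x N H = {(i,j). 1 \<le> i \<and> i < j \<and> j \<le> N \<and>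
      \<bar>x i \<bullet> x j\<bar> > H * Max ((\<lambda>h. norm (x h)) ` {1..N})}"

end

theory Submission
  imports Defs
begin

text \<open>If the chromatic number of G_H exceeds m, colouring greedily in order of increasing norm
  fails, so some vertex v has m neighbours w with |X_w| \<le> |X_v|. Each such edge forces
  |<X_w,X_v>| > H |X_v| and |X_v| \<ge> |X_w| > H, so the weight
  (|X_v|/H)^p * \<Prod>_w (|<X_w,X_v>| / (H |X_v|))^p of this star is at least 1.
  Integrating out the leaves first, independence and the directional moment bound bound its
  expectation by n^(p/2) B H^-p (B H^-p)^m, where E |X|^p \<le> n^(p/2) B comes from the power mean
  inequality on the coordinates. A union bound over the N (N-1 choose m) stars bounds the failure
  probability by (B N H^-p)^(m+1) n^(p/2), which is at most (B N H^-p)^m n^(p/2) unless the latter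
  exceeds 1 anyway.\<close>

lemma chromatic_number_le:
  assumes "proper_colouring V Ed k c"
  shows "chromatic_number V Ed \<le> k"
  unfolding chromatic_number_def using assms by (auto intro: Least_le)

lemma chromatic_number_le_iff:
  assumes "finite V" and Ed: "Ed \<subseteq> V \<times> V" and loopfree: "\<And>v. (v, v) \<notin> Ed"
  shows "chromatic_number V Ed \<le> m \<longleftrightarrow> (\<exists>c\<in>V \<rightarrow>\<^sub>E {0..<m}. \<forall>(u, w)\<in>Ed. c u \<noteq> c w)"
proof
  obtain h where h: "bij_betw h V {0..<card V}"
    using ex_bij_betw_finite_nat[OF \<open>finite V\<close>] by blast
  have "proper_colouring V Ed (card V) h"
    using h Ed loopfree unfolding proper_colouring_def bij_betw_def inj_on_def by fastforce
  then have "\<exists>k c. proper_colouring V Ed k c" by blast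
  from LeastI_ex[OF this] obtain c where c: "proper_colouring V Ed (chromatic_number V Ed) c"
    unfolding chromatic_number_def by blast
  assume "chromatic_number V Ed \<le> m"
  with c show "\<exists>c\<in>V \<rightarrow>\<^sub>E {0..<m}. \<forall>(u, w)\<in>Ed. c u \<noteq> c w"
    using Ed by (intro bexI[of _ "restrict c V"]) (fastforce simp: proper_colouring_def)+
next
  assume "\<exists>c\<in>V \<rightarrow>\<^sub>E {0..<m}. \<forall>(u, w)\<in>Ed. c u \<noteq> c w"
  then obtain c where "proper_colouring V Ed m c"
    unfolding proper_colouring_def by fastforce
  then show "chromatic_number V Ed \<le> m"
    by (rule chromatic_number_le)
qed

lemma ex_less_notin_image:
  assumes "finite A" and "card A < m"
  shows "\<exists>k<m. k \<notin> c ` A"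
proof -
  have "card (c ` A) < card {0..<m}"
    using card_image_le[OF \<open>finite A\<close>, of c] assms(2) by simp
  then have "\<not> {0..<m} \<subseteq> c ` A"
    using card_mono[of "c ` A" "{0..<m}"] \<open>finite A\<close> by auto
  then show ?thesis by auto
qed

lemma greedy_colouring:
  fixes f :: "'v \<Rightarrow> 'b::linorder"
  assumes "finite V" and loopfree: "\<And>v. (v, v) \<notin> Ed"
    and few: "\<And>v. v \<in> V \<Longrightarrow> card {w\<in>V. ((w, v) \<in> Ed \<or> (v, w) \<in> Ed) \<and> f w \<le> f v} < m"
  shows "\<exists>c. (\<forall>v\<in>V. c v < m) \<and> (\<forall>u\<in>V. \<forall>w\<in>V. (u, w) \<in> Ed \<longrightarrow> c u \<noteq> c w)"
  using assms(1) few
proof (induction V rule: finite_ranking_induct[where f=f])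
  case empty
  then show ?case by auto
next
  case (insert x S)
  let ?lower = "\<lambda>T v. {w\<in>T. ((w, v) \<in> Ed \<or> (v, w) \<in> Ed) \<and> f w \<le> f v}"
  have "card (?lower S v) < m" if "v \<in> S" for v
  proof -
    have "card (?lower S v) \<le> card (?lower (insert x S) v)"
      using insert.hyps(1) by (intro card_mono) auto
    with insert.prems[of v] that show ?thesis by simp
  qed
  then obtain c where c: "\<forall>v\<in>S. c v < m" "\<forall>u\<in>S. \<forall>w\<in>S. (u, w) \<in> Ed \<longrightarrow> c u \<noteq> c w"
    using insert.IH by blast
  define Nb where "Nb = {w\<in>S. (w, x) \<in> Ed \<or> (x, w) \<in> Ed}"
  have "Nb \<subseteq> ?lower (insert x S) x"
    using insert.hyps(2) by (auto simp: Nb_def)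
  then have "card Nb < m"
    using insert.prems[of x] insert.hyps(1) card_mono[of "?lower (insert x S) x" Nb] by simp
  then obtain k where k: "k < m" "k \<notin> c ` Nb"
    using ex_less_notin_image[of Nb m c] insert.hyps(1) by (auto simp: Nb_def)
  show ?case
    using c k loopfree by (intro exI[of _ "c(x := k)"]) (auto simp: Nb_def)
qed

lemma chromatic_number_le_if_few_lower_neighbours:
  fixes f :: "'v \<Rightarrow> 'b::linorder"
  assumes "finite V" and "Ed \<subseteq> V \<times> V" and "\<And>v. (v, v) \<notin> Ed"
    and "\<And>v. v \<in> V \<Longrightarrow> card {w\<in>V. ((w, v) \<in> Ed \<or> (v, w) \<in> Ed) \<and> f w \<le> f v} < m"
  shows "chromatic_number V Ed \<le> m"
proof -
  obtain c where "\<forall>v\<in>V. c v < m" "\<forall>u\<in>V. \<forall>w\<in>V. (u, w) \<in> Ed \<longrightarrow> c u \<noteq> c w"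
    using greedy_colouring[of V Ed f m] assms by blast
  then have "proper_colouring V Ed m c"
    using assms(2) by (auto simp: proper_colouring_def)
  then show ?thesis by (rule chromatic_number_le)
qed

lemma powr_sum_le_card_powr_mult_sum_powr:
  fixes a :: "'i \<Rightarrow> real"
  assumes I: "finite I" and a: "\<And>i. i \<in> I \<Longrightarrow> a i \<ge> 0" and q: "q \<ge> 1"
  shows "(\<Sum>i\<in>I. a i) powr q \<le> real (card I) powr (q - 1) * (\<Sum>i\<in>I. a i powr q)"
proof -
  \<comment> \<open>Jensen is applied on the positive terms only, as convexity of powr holds on {0<..}.\<close>
  define P where "P = {i\<in>I. a i > 0}"
  have PI: "P \<subseteq> I" and fP: "finite P" using I by (auto simp: P_def)
  have sum_P: "(\<Sum>i\<in>I. a i) = (\<Sum>i\<in>P. a i)"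
    by (rule sum.mono_neutral_right[OF I PI]) (use a in \<open>force simp: P_def\<close>)
  show ?thesis
  proof (cases "P = {}")
    case True
    then show ?thesis using sum_P q by (auto intro!: mult_nonneg_nonneg sum_nonneg)
  next
    case False
    define k where "k = real (card P)"
    have k: "k \<ge> 1" using False fP by (auto simp: k_def Suc_le_eq card_gt_0_iff)
    have "((\<Sum>i\<in>P. a i) / k) powr q = (\<Sum>i\<in>P. (1/k) *\<^sub>R a i) powr q"
      by (simp add: sum_divide_distrib)
    also have "\<dots> \<le> (\<Sum>i\<in>P. (1/k) * a i powr q)"
      by (rule convex_on_sum[OF fP False powr_convex[OF q]])
         (use k in \<open>auto simp: k_def P_def\<close>)
    also have "\<dots> = (\<Sum>i\<in>P. a i powr q) / k"
      by (simp add: sum_divide_distrib)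
    finally have "(\<Sum>i\<in>P. a i) powr q \<le> k powr q * ((\<Sum>i\<in>P. a i powr q) / k)"
      using k by (simp add: powr_divide sum_nonneg P_def less_imp_le divide_le_eq mult.commute)
    also have "\<dots> = k powr (q - 1) * (\<Sum>i\<in>P. a i powr q)"
      using k by (simp add: powr_diff)
    also have "\<dots> \<le> real (card I) powr (q - 1) * (\<Sum>i\<in>I. a i powr q)"
      using k q card_mono[OF I PI] sum_mono2[OF I PI, of "\<lambda>i. a i powr q"]
      by (intro mult_mono powr_mono2) (auto simp: k_def intro!: sum_nonneg)
    finally show ?thesis using sum_P by simp
  qed
qed

lemma norm_powr_le_card_powr_mult_sum_powr:
  fixes x :: "real ^ 'n"
  assumes "p \<ge> 2"
  shows "norm x powr p \<le> real CARD('n) powr (p/2 - 1) * (\<Sum>i\<in>UNIV. \<bar>x $ i\<bar> powr p)"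
proof -
  have abs_powr: "(t\<^sup>2) powr (p/2) = \<bar>t\<bar> powr p" for t :: real
  proof -
    have "(t\<^sup>2) powr (p/2) = (\<bar>t\<bar> powr 2) powr (p/2)"
      by (simp only: powr_numeral[OF abs_ge_zero] power2_abs)
    also have "\<dots> = \<bar>t\<bar> powr p"
      unfolding powr_powr by simp
    finally show ?thesis .
  qed
  have "norm x powr p = (\<Sum>i\<in>UNIV. (x $ i)\<^sup>2) powr (p/2)"
    by (simp add: norm_vec_def L2_set_def powr_half_sqrt[symmetric] powr_powr sum_nonneg)
  also have "\<dots> \<le> real CARD('n) powr (p/2 - 1) * (\<Sum>i\<in>UNIV. ((x $ i)\<^sup>2) powr (p/2))"
    by (rule powr_sum_le_card_powr_mult_sum_powr) (use assms in auto)
  finally show ?thesis by (simp add: abs_powr)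
qed

lemma powr_divide_eq_powr_minus_mult:
  fixes a H p :: real
  assumes "a \<ge> 0" and "H > 0"
  shows "(a / H) powr p = H powr (- p) * a powr p"
  using assms by (simp add: powr_divide powr_minus field_simps)

lemma nn_integral_divide_powr:
  fixes f :: "'a \<Rightarrow> real"
  assumes [measurable]: "f \<in> borel_measurable D" and "\<And>z. f z \<ge> 0" and "H > 0"
  shows "(\<integral>\<^sup>+z. ennreal ((f z / H) powr p) \<partial>D) = ennreal (H powr (- p)) * (\<integral>\<^sup>+z. ennreal (f z powr p) \<partial>D)"
  using assms(2,3)
  by (simp add: powr_divide_eq_powr_minus_mult ennreal_mult nn_integral_cmult)

lemma nn_integral_norm_powr_le:
  fixes D :: "(real ^ 'n) measure" and p B :: real
  assumes sets_D[measurable_cong]: "sets D = sets borel" and p: "p \<ge> 2" and B: "B \<ge> 0"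
    and moment: "\<And>y. norm y = 1 \<Longrightarrow> (\<integral>\<^sup>+z. ennreal (\<bar>z \<bullet> y\<bar> powr p) \<partial>D) \<le> ennreal B"
  shows "(\<integral>\<^sup>+z. ennreal (norm z powr p) \<partial>D) \<le> ennreal (real CARD('n) powr (p/2) * B)"
proof -
  define c where "c = real CARD('n) powr (p/2 - 1)"
  have "(\<integral>\<^sup>+z. ennreal (norm z powr p) \<partial>D)
      \<le> (\<integral>\<^sup>+z. ennreal c * (\<Sum>i\<in>UNIV. ennreal (\<bar>z $ i\<bar> powr p)) \<partial>D)"
  proof (rule nn_integral_mono)
    fix z :: "real ^ 'n"
    have "ennreal (norm z powr p) \<le> ennreal (c * (\<Sum>i\<in>UNIV. \<bar>z $ i\<bar> powr p))"
      using norm_powr_le_card_powr_mult_sum_powr[OF p] unfolding c_def by (rule ennreal_leI)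
    then show "ennreal (norm z powr p) \<le> ennreal c * (\<Sum>i\<in>UNIV. ennreal (\<bar>z $ i\<bar> powr p))"
      by (simp add: c_def ennreal_mult sum_nonneg sum_ennreal)
  qed
  also have "\<dots> = ennreal c * (\<Sum>i\<in>UNIV. (\<integral>\<^sup>+z. ennreal (\<bar>z $ i\<bar> powr p) \<partial>D))"
    by (subst nn_integral_cmult, measurable, subst nn_integral_sum, auto simp del: sum_ennreal)
  also have "\<dots> \<le> ennreal c * (\<Sum>i\<in>(UNIV::'n set). ennreal B)"
    using moment[of "axis _ 1"] by (intro mult_left_mono sum_mono) (auto simp: inner_axis)
  also have "\<dots> = ennreal (c * (real CARD('n) * B))"
    using B by (simp add: c_def ennreal_mult ennreal_of_nat_eq_real_of_nat)
  also have "\<dots> = ennreal (real CARD('n) powr (p/2) * B)"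
    by (simp add: c_def powr_diff)
  finally show ?thesis .
qed

lemma nn_integral_inner_powr_le:
  fixes D :: "('a::euclidean_space) measure" and u :: 'a
  assumes [measurable_cong]: "sets D = sets borel" and H: "H > 0" and B: "B \<ge> 0"
    and moment: "\<And>y. norm y = 1 \<Longrightarrow> (\<integral>\<^sup>+z. ennreal (\<bar>z \<bullet> y\<bar> powr p) \<partial>D) \<le> ennreal B"
  shows "(\<integral>\<^sup>+z. ennreal ((\<bar>z \<bullet> u\<bar> / (H * norm u)) powr p) \<partial>D) \<le> ennreal (B * H powr (- p))"
proof (cases "u = 0")
  case False
  define u' where "u' = u /\<^sub>R norm u"
  have "\<bar>z \<bullet> u\<bar> / (H * norm u) = \<bar>z \<bullet> u'\<bar> / H" for z
    using False by (simp add: u'_def abs_mult field_simps)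
  then have "(\<integral>\<^sup>+z. ennreal ((\<bar>z \<bullet> u\<bar> / (H * norm u)) powr p) \<partial>D)
      = ennreal (H powr (- p)) * (\<integral>\<^sup>+z. ennreal (\<bar>z \<bullet> u'\<bar> powr p) \<partial>D)"
    using H by (simp add: nn_integral_divide_powr)
  also have "\<dots> \<le> ennreal (H powr (- p)) * ennreal B"
    using False by (intro mult_left_mono moment) (auto simp: u'_def)
  finally show ?thesis
    using B by (simp add: ennreal_mult mult.commute)
qed simp

definition star_weight :: "real \<Rightarrow> real \<Rightarrow> ('i \<Rightarrow> 'a::real_inner) \<Rightarrow> 'i \<Rightarrow> 'i set \<Rightarrow> ennreal" where
  "star_weight p H x v S =
     ennreal ((norm (x v) / H) powr p) * (\<Prod>w\<in>S. ennreal ((\<bar>x w \<bullet> x v\<bar> / (H * norm (x v))) powr p))"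

lemma star_weight_cong:
  assumes "\<And>k. k \<in> insert v S \<Longrightarrow> x k = y k"
  shows "star_weight p H x v S = star_weight p H y v S"
  using assms unfolding star_weight_def by (auto intro!: prod.cong)

lemma one_le_star_weight:
  assumes p: "p \<ge> 0" and H: "H > 0" and v: "H \<le> norm (x v)"
    and S: "\<And>w. w \<in> S \<Longrightarrow> H * norm (x v) \<le> \<bar>x w \<bullet> x v\<bar>"
  shows "1 \<le> star_weight p H x v S"
proof -
  have "1 \<le> ennreal ((norm (x v) / H) powr p)"
    using v H p by (simp add: ge_one_powr_ge_zero)
  moreover have "1 \<le> (\<Prod>w\<in>S. ennreal ((\<bar>x w \<bullet> x v\<bar> / (H * norm (x v))) powr p))"
  proof (rule prod_ge_1)
    fix w assume "w \<in> S"
    moreover have "0 < H * norm (x v)"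
      using v H by (intro mult_pos_pos) auto
    ultimately have "1 \<le> \<bar>x w \<bullet> x v\<bar> / (H * norm (x v))"
      using S[of w] by simp
    then show "1 \<le> ennreal ((\<bar>x w \<bullet> x v\<bar> / (H * norm (x v))) powr p)"
      using p by (simp add: ge_one_powr_ge_zero)
  qed
  ultimately show ?thesis
    unfolding star_weight_def using mult_mono[of 1 _ 1 _] by fastforce
qed

lemma borel_measurable_star_weight:
  "(\<lambda>x. star_weight p H x v S)
     \<in> borel_measurable (PiM (insert v S) (\<lambda>_. borel :: 'a::euclidean_space measure))"
  unfolding star_weight_def by measurable

lemma GH_edges_subset: "GH_edges x N H \<subseteq> {1..N} \<times> {1..N}"
  by (auto simp: GH_edges_def)

lemma GH_edges_loopfree: "(v, v) \<notin> GH_edges x N H"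
  by (simp add: GH_edges_def)

lemma GH_edge_bounds:
  assumes H: "H > 0" and edge: "(w, v) \<in> GH_edges x N H \<or> (v, w) \<in> GH_edges x N H"
  shows "H * norm (x v) < \<bar>x w \<bullet> x v\<bar>" and "H < norm (x w)"
proof -
  let ?max = "Max ((\<lambda>h. norm (x h)) ` {1..N})"
  have "v \<in> {1..N}" and big: "H * ?max < \<bar>x w \<bullet> x v\<bar>"
    using edge by (auto simp: GH_edges_def inner_commute)
  then have "H * norm (x v) \<le> H * ?max"
    using H by (intro mult_left_mono Max_ge) auto
  with big show small: "H * norm (x v) < \<bar>x w \<bullet> x v\<bar>"
    by linarith
  have cs: "\<bar>x w \<bullet> x v\<bar> \<le> norm (x w) * norm (x v)"
    by (rule Cauchy_Schwarz_ineq2)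
  have "0 \<le> H * norm (x v)"
    using H by simp
  with small cs have "0 < norm (x w) * norm (x v)"
    by linarith
  then have "0 < norm (x v)"
    by (simp add: zero_less_mult_iff)
  moreover have "H * norm (x v) < norm (x w) * norm (x v)"
    using small cs by linarith
  ultimately show "H < norm (x w)"
    by simp
qed

lemma GH_chromatic_number_gt_imp_heavy_star:
  assumes H: "H > 0" and p: "p \<ge> 0" and m: "m > 0"
    and chi: "m < chromatic_number {1..N} (GH_edges x N H)"
  shows "\<exists>v\<in>{1..N}. \<exists>S. S \<subseteq> {1..N} - {v} \<and> card S = m \<and> 1 \<le> star_weight p H x v S"
proof -
  let ?E = "GH_edges x N H"
  define lower where
    "lower v = {w\<in>{1..N}. ((w, v) \<in> ?E \<or> (v, w) \<in> ?E) \<and> norm (x w) \<le> norm (x v)}" for v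
  have "\<not> (\<forall>v\<in>{1..N}. card (lower v) < m)"
  proof
    assume "\<forall>v\<in>{1..N}. card (lower v) < m"
    then have "chromatic_number {1..N} ?E \<le> m"
      unfolding lower_def
      by (intro chromatic_number_le_if_few_lower_neighbours[where f="\<lambda>k. norm (x k)"]
          GH_edges_subset GH_edges_loopfree) auto
    with chi show False by simp
  qed
  then obtain v where v: "v \<in> {1..N}" and "m \<le> card (lower v)"
    by (auto simp: not_less)
  then obtain S where S: "S \<subseteq> lower v" "card S = m"
    by (meson obtain_subset_with_card_n)
  then obtain w0 where "w0 \<in> S"
    using m by fastforce
  then have "H < norm (x v)"
    using S GH_edge_bounds(2)[OF H, of w0 v x N] by (fastforce simp: lower_def)
  moreover have "H * norm (x v) \<le> \<bar>x w \<bullet> x v\<bar>" if "w \<in> S" for w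
    using that S GH_edge_bounds(1)[OF H, of w v x N] by (fastforce simp: lower_def)
  ultimately have "1 \<le> star_weight p H x v S"
    by (intro one_le_star_weight[OF p H]) auto
  moreover have "S \<subseteq> {1..N} - {v}"
    using S GH_edges_loopfree[of v x N H] by (auto simp: lower_def)
  ultimately show ?thesis
    using v S by blast
qed

lemma nn_integral_star_weight_PiM_le:
  fixes D :: "('a::euclidean_space) measure" and c q :: ennreal
  assumes D: "prob_space D" and sets_D[measurable_cong]: "sets D = sets borel"
    and S: "finite S" "v \<notin> S"
    and inner_bound: "\<And>u. (\<integral>\<^sup>+z. ennreal ((\<bar>z \<bullet> u\<bar> / (H * norm u)) powr p) \<partial>D) \<le> q"
    and norm_bound: "(\<integral>\<^sup>+z. ennreal ((norm z / H) powr p) \<partial>D) \<le> c"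
  shows "(\<integral>\<^sup>+x. star_weight p H x v S \<partial>PiM (insert v S) (\<lambda>_. D)) \<le> c * q ^ card S"
proof -
  interpret product_sigma_finite "\<lambda>_. D"
    unfolding product_sigma_finite_def using D prob_space_imp_sigma_finite by blast
  have "(\<lambda>x. star_weight p H x v S) \<in> borel_measurable (PiM (insert v S) (\<lambda>_. D))"
    unfolding star_weight_def by measurable
  then have "(\<integral>\<^sup>+x. star_weight p H x v S \<partial>PiM (insert v S) (\<lambda>_. D))
      = (\<integral>\<^sup>+y. (\<integral>\<^sup>+x. star_weight p H (x(v := y)) v S \<partial>PiM S (\<lambda>_. D)) \<partial>D)"
    by (rule product_nn_integral_insert_rev[OF S])
  also have "\<dots> \<le> (\<integral>\<^sup>+y. ennreal ((norm y / H) powr p) * q ^ card S \<partial>D)"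
  proof (rule nn_integral_mono)
    fix y :: 'a
    have "(\<integral>\<^sup>+x. star_weight p H (x(v := y)) v S \<partial>PiM S (\<lambda>_. D))
        = (\<integral>\<^sup>+x. ennreal ((norm y / H) powr p) *
            (\<Prod>w\<in>S. ennreal ((\<bar>x w \<bullet> y\<bar> / (H * norm y)) powr p)) \<partial>PiM S (\<lambda>_. D))"
      using S unfolding star_weight_def
      by (intro nn_integral_cong) (auto intro!: arg_cong2[where f="(*)"] prod.cong)
    also have "\<dots> = ennreal ((norm y / H) powr p) *
        (\<integral>\<^sup>+x. (\<Prod>w\<in>S. ennreal ((\<bar>x w \<bullet> y\<bar> / (H * norm y)) powr p)) \<partial>PiM S (\<lambda>_. D))"
      by (rule nn_integral_cmult) measurable
    also have "\<dots> \<le> ennreal ((norm y / H) powr p) * q ^ card S"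
    proof (rule mult_left_mono)
      have "(\<integral>\<^sup>+x. (\<Prod>w\<in>S. ennreal ((\<bar>x w \<bullet> y\<bar> / (H * norm y)) powr p)) \<partial>PiM S (\<lambda>_. D))
          = (\<Prod>w\<in>S. (\<integral>\<^sup>+z. ennreal ((\<bar>z \<bullet> y\<bar> / (H * norm y)) powr p) \<partial>D))"
        by (rule product_nn_integral_prod[OF S(1)]) measurable
      also have "\<dots> \<le> (\<Prod>w\<in>S. q)"
        by (rule prod_mono_ennreal) (rule inner_bound)
      finally show "(\<integral>\<^sup>+x. (\<Prod>w\<in>S. ennreal ((\<bar>x w \<bullet> y\<bar> / (H * norm y)) powr p)) \<partial>PiM S (\<lambda>_. D))
          \<le> q ^ card S"
        by simp
    qed simp
    finally show "(\<integral>\<^sup>+x. star_weight p H (x(v := y)) v S \<partial>PiM S (\<lambda>_. D))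
        \<le> ennreal ((norm y / H) powr p) * q ^ card S" .
  qed
  also have "\<dots> = (\<integral>\<^sup>+y. ennreal ((norm y / H) powr p) \<partial>D) * q ^ card S"
    by (rule nn_integral_multc) measurable
  also have "\<dots> \<le> c * q ^ card S"
    by (intro mult_right_mono norm_bound) auto
  finally show ?thesis .
qed

lemma (in prob_space) nn_integral_indep_copies:
  assumes J: "J \<noteq> {}" and rv: "\<And>k. k \<in> J \<Longrightarrow> Xs k \<in> borel_measurable M"
    and indep: "indep_vars (\<lambda>_. borel) Xs J"
    and copies: "\<And>k. k \<in> J \<Longrightarrow> distr M borel (Xs k) = D"
    and G: "G \<in> borel_measurable (PiM J (\<lambda>_. borel))"
  shows "(\<integral>\<^sup>+\<omega>. G (\<lambda>k\<in>J. Xs k \<omega>) \<partial>M) = (\<integral>\<^sup>+x. G x \<partial>PiM J (\<lambda>_. D))"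
proof -
  have Y: "(\<lambda>\<omega>. \<lambda>k\<in>J. Xs k \<omega>) \<in> measurable M (PiM J (\<lambda>_. borel))"
    using rv by (intro measurable_restrict) auto
  have "distr M (PiM J (\<lambda>_. borel)) (\<lambda>\<omega>. \<lambda>k\<in>J. Xs k \<omega>) = PiM J (\<lambda>k. distr M borel (Xs k))"
    using indep by (subst (asm) indep_vars_iff_distr_eq_PiM'[OF J]) (use rv in auto)
  also have "\<dots> = PiM J (\<lambda>_. D)"
    using copies by (intro PiM_cong) auto
  finally have distr_eq: "distr M (PiM J (\<lambda>_. borel)) (\<lambda>\<omega>. \<lambda>k\<in>J. Xs k \<omega>) = PiM J (\<lambda>_. D)" .
  have "(\<integral>\<^sup>+\<omega>. G (\<lambda>k\<in>J. Xs k \<omega>) \<partial>M)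
      = (\<integral>\<^sup>+x. G x \<partial>distr M (PiM J (\<lambda>_. borel)) (\<lambda>\<omega>. \<lambda>k\<in>J. Xs k \<omega>))"
    using G by (intro nn_integral_distr[symmetric] Y) simp
  then show ?thesis
    unfolding distr_eq .
qed

lemma (in prob_space) nn_integral_star_weight_le:
  fixes X :: "'a \<Rightarrow> real ^ 'n" and Xs :: "'i \<Rightarrow> 'a \<Rightarrow> real ^ 'n"
  assumes X_rv[measurable]: "X \<in> borel_measurable M"
    and Xs_rv: "\<And>k. k \<in> I \<Longrightarrow> Xs k \<in> borel_measurable M"
    and indep: "indep_vars (\<lambda>_. borel) Xs I"
    and copies: "\<And>k. k \<in> I \<Longrightarrow> distr M borel (Xs k) = distr M borel X"
    and p: "p \<ge> 2" and H: "H > 0" and B: "B \<ge> 0"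
    and moment: "\<And>y. norm y = 1 \<Longrightarrow> (\<integral>\<^sup>+\<omega>. ennreal (\<bar>X \<omega> \<bullet> y\<bar> powr p) \<partial>M) \<le> ennreal B"
    and v: "v \<in> I" and S: "S \<subseteq> I - {v}" "finite S"
  shows "(\<integral>\<^sup>+\<omega>. star_weight p H (\<lambda>k. Xs k \<omega>) v S \<partial>M)
    \<le> ennreal (real CARD('n) powr (p/2) * B * H powr (- p)) * ennreal (B * H powr (- p)) ^ card S"
proof -
  define D where "D = distr M borel X"
  have sets_D[measurable_cong]: "sets D = sets borel"
    by (simp add: D_def)
  have moment_D: "(\<integral>\<^sup>+z. ennreal (\<bar>z \<bullet> y\<bar> powr p) \<partial>D) \<le> ennreal B" if "norm y = 1" for y
    using moment[OF that] by (simp add: D_def nn_integral_distr)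
  have "(\<integral>\<^sup>+z. ennreal ((norm z / H) powr p) \<partial>D)
      = ennreal (H powr (- p)) * (\<integral>\<^sup>+z. ennreal (norm z powr p) \<partial>D)"
    using H by (intro nn_integral_divide_powr) auto
  also have "\<dots> \<le> ennreal (H powr (- p)) * ennreal (real CARD('n) powr (p/2) * B)"
    using nn_integral_norm_powr_le[OF sets_D p B moment_D] by (intro mult_left_mono) auto
  finally have norm_bound:
    "(\<integral>\<^sup>+z. ennreal ((norm z / H) powr p) \<partial>D) \<le> ennreal (real CARD('n) powr (p/2) * B * H powr (- p))"
    using B by (simp add: ennreal_mult' mult_ac)
  have "(\<integral>\<^sup>+\<omega>. star_weight p H (\<lambda>k. Xs k \<omega>) v S \<partial>M)
      = (\<integral>\<^sup>+\<omega>. star_weight p H (\<lambda>k\<in>insert v S. Xs k \<omega>) v S \<partial>M)"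
    by (intro nn_integral_cong star_weight_cong) simp
  also have "\<dots> = (\<integral>\<^sup>+x. star_weight p H x v S \<partial>PiM (insert v S) (\<lambda>_. D))"
    using v S Xs_rv copies indep_vars_subset[OF indep, of "insert v S"]
    by (intro nn_integral_indep_copies borel_measurable_star_weight) (auto simp: D_def)
  also have "\<dots> \<le> ennreal (real CARD('n) powr (p/2) * B * H powr (- p)) * ennreal (B * H powr (- p)) ^ card S"
    using S nn_integral_inner_powr_le[OF sets_D H B moment_D]
    by (intro nn_integral_star_weight_PiM_le norm_bound) (auto simp: D_def intro: prob_space_distr)
  finally show ?thesis .
qed

lemma GH_edges_cong:
  assumes "\<And>k. k \<in> {1..N} \<Longrightarrow> x k = y k"
  shows "GH_edges x N H = GH_edges y N H"
proof -
  have "(\<lambda>h. norm (x h)) ` {1..N} = (\<lambda>h. norm (y h)) ` {1..N}"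
    using assms by (intro image_cong) auto
  then show ?thesis
    using assms unfolding GH_edges_def by fastforce
qed

lemma GH_chromatic_number_le_iff:
  "chromatic_number {1..N} (GH_edges x N H) \<le> m \<longleftrightarrow>
    (\<exists>c\<in>{1..N} \<rightarrow>\<^sub>E {0..<m}. \<forall>i\<in>{1..N}. \<forall>j\<in>{1..N}.
        i < j \<and> c i = c j \<longrightarrow> \<not> H * Max ((\<lambda>h. norm (x h)) ` {1..N}) < \<bar>x i \<bullet> x j\<bar>)"
proof -
  have edges_iff: "(\<forall>(i, j)\<in>GH_edges x N H. c i \<noteq> c j) \<longleftrightarrow> (\<forall>i\<in>{1..N}. \<forall>j\<in>{1..N}.
      i < j \<and> c i = c j \<longrightarrow> \<not> H * Max ((\<lambda>h. norm (x h)) ` {1..N}) < \<bar>x i \<bullet> x j\<bar>)" for c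
    by (auto simp: GH_edges_def)
  show ?thesis
    unfolding chromatic_number_le_iff[OF finite_atLeastAtMost GH_edges_subset GH_edges_loopfree]
    by (rule bex_cong[OF refl edges_iff])
qed

lemma measurable_GH_chromatic_number_le:
  fixes Xs :: "nat \<Rightarrow> 'a \<Rightarrow> real ^ 'n"
  assumes Xs_rv: "\<And>k. k \<in> {1..N} \<Longrightarrow> Xs k \<in> borel_measurable M"
  shows "{\<omega> \<in> space M. chromatic_number {1..N} (GH_edges (\<lambda>k. Xs k \<omega>) N H) \<le> m} \<in> sets M"
proof -
  \<comment> \<open>Extending Xs by 0 outside {1..N} makes every component measurable.\<close>
  define Z where "Z k = (if k \<in> {1..N} then Xs k else (\<lambda>_. 0))" for k
  have [measurable]: "Z k \<in> borel_measurable M" for k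
    using Xs_rv by (simp add: Z_def)
  have "GH_edges (\<lambda>k. Xs k \<omega>) N H = GH_edges (\<lambda>k. Z k \<omega>) N H" for \<omega>
    by (rule GH_edges_cong) (simp add: Z_def)
  then have "{\<omega> \<in> space M. chromatic_number {1..N} (GH_edges (\<lambda>k. Xs k \<omega>) N H) \<le> m}
      = {\<omega> \<in> space M. chromatic_number {1..N} (GH_edges (\<lambda>k. Z k \<omega>) N H) \<le> m}"
    by simp
  also have "\<dots> = {\<omega> \<in> space M. \<exists>c\<in>{1..N} \<rightarrow>\<^sub>E {0..<m}. \<forall>i\<in>{1..N}. \<forall>j\<in>{1..N}.
        i < j \<and> c i = c j \<longrightarrow> \<not> H * Max ((\<lambda>h. norm (Z h \<omega>)) ` {1..N}) < \<bar>Z i \<omega> \<bullet> Z j \<omega>\<bar>}"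
    by (simp only: GH_chromatic_number_le_iff)
  also have "\<dots> \<in> sets M"
    by (intro sets.sets_Collect_finite_Ex sets.sets_Collect_finite_All) (simp_all add: finite_PiE, measurable)
  finally show ?thesis .
qed

lemma (in prob_space) prob_GH_chromatic_number_gt_le:
  fixes Xs :: "nat \<Rightarrow> 'a \<Rightarrow> real ^ 'n" and K :: real
  assumes Xs_rv: "\<And>k. k \<in> {1..N} \<Longrightarrow> Xs k \<in> borel_measurable M"
    and H: "H > 0" and p: "p \<ge> 0" and m: "m > 0" and K: "K \<ge> 0"
    and weight: "\<And>v S. v \<in> {1..N} \<Longrightarrow> S \<subseteq> {1..N} - {v} \<Longrightarrow> card S = m \<Longrightarrow>
        (\<integral>\<^sup>+\<omega>. star_weight p H (\<lambda>k. Xs k \<omega>) v S \<partial>M) \<le> ennreal K"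
  shows "prob {\<omega> \<in> space M. m < chromatic_number {1..N} (GH_edges (\<lambda>k. Xs k \<omega>) N H)}
    \<le> real N * real ((N - 1) choose m) * K"
proof -
  let ?bad = "{\<omega> \<in> space M. m < chromatic_number {1..N} (GH_edges (\<lambda>k. Xs k \<omega>) N H)}"
  let ?w = "\<lambda>v S \<omega>. star_weight p H (\<lambda>k. Xs k \<omega>) v S"
  define T where "T v = {S. S \<subseteq> {1..N} - {v} \<and> card S = m}" for v
  have finite_T: "finite (T v)" for v
    by (rule finite_subset[of _ "Pow {1..N}"]) (auto simp: T_def)
  have card_T: "card (T v) = (N - 1) choose m" if "v \<in> {1..N}" for v
    using that n_subsets[of "{1..N} - {v}" m] by (simp add: T_def)
  have "?bad = space M - {\<omega> \<in> space M. chromatic_number {1..N} (GH_edges (\<lambda>k. Xs k \<omega>) N H) \<le> m}"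
    by auto
  then have bad_sets: "?bad \<in> sets M"
    using measurable_GH_chromatic_number_le[OF Xs_rv] by auto
  have w_meas: "?w v S \<in> borel_measurable M" if "v \<in> {1..N}" "S \<in> T v" for v S
  proof -
    have "(\<lambda>\<omega>. \<lambda>k\<in>insert v S. Xs k \<omega>) \<in> measurable M (PiM (insert v S) (\<lambda>_. borel))"
      using that Xs_rv by (intro measurable_restrict) (auto simp: T_def)
    moreover have "?w v S \<omega> = star_weight p H (\<lambda>k\<in>insert v S. Xs k \<omega>) v S" for \<omega>
      by (rule star_weight_cong) simp
    ultimately show ?thesis
      using measurable_compose[OF _ borel_measurable_star_weight] by simp
  qed
  have "emeasure M ?bad = (\<integral>\<^sup>+\<omega>. indicator ?bad \<omega> \<partial>M)"
    using bad_sets by simp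
  also have "\<dots> \<le> (\<integral>\<^sup>+\<omega>. (\<Sum>v\<in>{1..N}. \<Sum>S\<in>T v. ?w v S \<omega>) \<partial>M)"
  proof (rule nn_integral_mono)
    fix \<omega> assume "\<omega> \<in> space M"
    show "indicator ?bad \<omega> \<le> (\<Sum>v\<in>{1..N}. \<Sum>S\<in>T v. ?w v S \<omega>)"
    proof (cases "\<omega> \<in> ?bad")
      case True
      then have "m < chromatic_number {1..N} (GH_edges (\<lambda>k. Xs k \<omega>) N H)"
        by simp
      then obtain v S where v: "v \<in> {1..N}" and S: "S \<subseteq> {1..N} - {v}" "card S = m"
        and heavy: "1 \<le> ?w v S \<omega>"
        using GH_chromatic_number_gt_imp_heavy_star[OF H p m] by blast
      from S have "S \<in> T v"
        by (simp add: T_def)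
      then have "?w v S \<omega> \<le> (\<Sum>S\<in>T v. ?w v S \<omega>)"
        by (rule member_le_sum[OF _ _ finite_T]) simp
      also have "\<dots> \<le> (\<Sum>v\<in>{1..N}. \<Sum>S\<in>T v. ?w v S \<omega>)"
        by (rule member_le_sum[OF v]) simp_all
      finally show ?thesis
        using True heavy by simp
    qed simp
  qed
  also have "\<dots> = (\<Sum>v\<in>{1..N}. (\<integral>\<^sup>+\<omega>. (\<Sum>S\<in>T v. ?w v S \<omega>) \<partial>M))"
    using w_meas by (intro nn_integral_sum borel_measurable_sum) auto
  also have "\<dots> = (\<Sum>v\<in>{1..N}. \<Sum>S\<in>T v. (\<integral>\<^sup>+\<omega>. ?w v S \<omega> \<partial>M))"
    using w_meas by (intro sum.cong refl nn_integral_sum) auto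
  also have "\<dots> \<le> (\<Sum>v\<in>{1..N}. \<Sum>S\<in>T v. ennreal K)"
    using weight by (intro sum_mono) (auto simp: T_def)
  also have "\<dots> = ennreal (real N * real ((N - 1) choose m) * K)"
    using K card_T by (simp add: ennreal_mult ennreal_of_nat_eq_real_of_nat mult_ac)
  finally show ?thesis
    using K by (simp add: emeasure_eq_measure)
qed

lemma min_one_union_bound_le_power:
  fixes q n2 :: real
  assumes q: "q \<ge> 0" and n2: "n2 \<ge> 1"
  shows "min 1 (real N * real ((N - 1) choose m) * (n2 * q * q ^ m)) \<le> (q * real N) ^ m * n2"
proof (cases "q * real N \<le> 1")
  case True
  have "(N - 1) choose m \<le> ((N - 1) choose m) * fact m"
    by simp
  also have "\<dots> \<le> (N - 1) ^ m"
    by (rule binomial_fact_pow)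
  also have "\<dots> \<le> N ^ m"
    by (simp add: power_mono)
  finally have "real ((N - 1) choose m) \<le> real N ^ m"
    by (metis of_nat_le_iff of_nat_power)
  then have "real N * real ((N - 1) choose m) * (n2 * q * q ^ m) \<le> real N * real N ^ m * (n2 * q * q ^ m)"
    using q n2 by (intro mult_right_mono mult_left_mono) auto
  also have "\<dots> = (q * real N) * (q * real N) ^ m * n2"
    by (simp add: power_mult_distrib mult_ac)
  also have "\<dots> \<le> (q * real N) ^ m * n2"
    using True q n2 by (intro mult_right_mono mult_left_le_one_le) auto
  finally show ?thesis
    by (simp add: min_le_iff_disj)
next
  case False
  then have "1 \<le> (q * real N) ^ m"
    by (simp add: one_le_power)
  also have "\<dots> \<le> (q * real N) ^ m * n2"
    using n2 calculation by simp
  finally show ?thesis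
    by (simp add: min_le_iff_disj)
qed

theorem proposition3p1:
  fixes M :: "'a measure" and X :: "'a \<Rightarrow> real ^ 'n" and Xs :: "nat \<Rightarrow> 'a \<Rightarrow> real ^ 'n"
    and N :: nat and p B H :: real and m :: nat
  assumes "prob_space M"
    and X_rv: "X \<in> borel_measurable M"
    and centered: "\<And>i. integrable M (\<lambda>\<omega>. X \<omega> $ i) \<and> prob_space.expectation M (\<lambda>\<omega>. X \<omega> $ i) = 0"
    and isotropic: "\<And>i j. integrable M (\<lambda>\<omega>. X \<omega> $ i * X \<omega> $ j) \<and>
           prob_space.expectation M (\<lambda>\<omega>. X \<omega> $ i * X \<omega> $ j) = (if i = j then 1 else 0)"
    and Xs_rv: "\<And>k. k \<in> {1..N} \<Longrightarrow> Xs k \<in> borel_measurable M"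
    and indep: "prob_space.indep_vars M (\<lambda>_. borel) Xs {1..N}"
    and copies: "\<And>k. k \<in> {1..N} \<Longrightarrow> distr M borel (Xs k) = distr M borel X"
    and p: "p > 2" and B: "B \<ge> 1"
    and moment: "\<And>y. norm y = 1 \<Longrightarrow>
           (\<integral>\<^sup>+\<omega>. ennreal (\<bar>X \<omega> \<bullet> y\<bar> powr p) \<partial>M) \<le> ennreal B"
    and H: "H > 0" and m: "m > 1"
  shows "prob_space.prob M {\<omega> \<in> space M. chromatic_number {1..N} (GH_edges (\<lambda>k. Xs k \<omega>) N H) \<le> m}
           \<ge> 1 - (B * real N * H powr (-p)) ^ m * real CARD('n) powr (p / 2)"
proof -
  interpret prob_space M by fact
  let ?good = "{\<omega> \<in> space M. chromatic_number {1..N} (GH_edges (\<lambda>k. Xs k \<omega>) N H) \<le> m}"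
  let ?bad = "{\<omega> \<in> space M. m < chromatic_number {1..N} (GH_edges (\<lambda>k. Xs k \<omega>) N H)}"
  define q where "q = B * H powr (- p)"
  define n2 where "n2 = real CARD('n) powr (p / 2)"
  have q: "q \<ge> 0" and n2: "n2 \<ge> 1"
    using B p by (auto simp: q_def n2_def ge_one_powr_ge_zero)
  have bad_le: "prob ?bad \<le> real N * real ((N - 1) choose m) * (n2 * q * q ^ m)"
  proof (rule prob_GH_chromatic_number_gt_le[OF Xs_rv H])
    fix v S assume "v \<in> {1..N}" "S \<subseteq> {1..N} - {v}" "card S = m"
    then have "(\<integral>\<^sup>+\<omega>. star_weight p H (\<lambda>k. Xs k \<omega>) v S \<partial>M) \<le> ennreal (n2 * q) * ennreal q ^ m"
      using nn_integral_star_weight_le[OF X_rv Xs_rv indep copies _ H _ moment, of v S] p B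
      by (auto simp: q_def n2_def mult.assoc finite_subset)
    also have "\<dots> = ennreal (n2 * q * q ^ m)"
      using q n2 by (simp add: ennreal_power ennreal_mult)
    finally show "(\<integral>\<^sup>+\<omega>. star_weight p H (\<lambda>k. Xs k \<omega>) v S \<partial>M) \<le> ennreal (n2 * q * q ^ m)" .
  qed (use p m q n2 in auto)
  have "?good \<in> sets M"
    by (rule measurable_GH_chromatic_number_le[OF Xs_rv])
  moreover have "?bad = space M - ?good"
    by auto
  ultimately have "prob ?bad = 1 - prob ?good"
    by (simp add: prob_compl)
  with bad_le have "1 - min 1 (real N * real ((N - 1) choose m) * (n2 * q * q ^ m)) \<le> prob ?good"
    by (auto simp: min_def)
  with min_one_union_bound_le_power[OF q n2, of N m] show ?thesis
    by (simp add: q_def n2_def mult_ac)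
qed

end
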